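(* Let $C=[c_{j_1,j_2}]\in\mathbb{R}^{n_1\times n_2}$, $\mathbf d_1\in\mathbb{R}^{n_1}_{++}$, $\mathbf d_2\in\mathbb{R}^{n_2}_{++}$ with $\mathbf 1_{n_1}^\top\mathbf d_1=\mathbf 1_{n_2}^\top\mathbf d_2$. Then there exists a unique $(\mathbf x,\mathbf y)\in\mathbb{R}^{n_1}\times\mathbb{R}^{n_2}$ with $c_{j_1,j_2}-x_{j_1}-y_{j_2}>0$ for all $j_1,j_2$ and $\mathbf 1_{n_1}^\top\mathbf x=\mathbf 1_{n_2}^\top\mathbf y$, such that the matrix $[(c_{j_1,j_2}-x_{j_1}-y_{j_2})^{-1}]$ has row sums vector $\mathbf d_1$ and column sums vector $\mathbf d_2$.
   Context: $\mathbf 1_n$ is the all-ones vector and $\mathbb{R}^n_{++}$ the set of entrywise positive vectors. *)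

theory Defs
  imports "HOL-Analysis.Analysis"
begin

end

theory Submission
  imports Defs
begin

(* Let W be a positive matrix with row sums d1 and column sums d2, e.g. W = d1 d2^T / (1^T d1).
   The equations to be solved are the stationarity conditions of the convex log-barrier function
   sum_ij (W_ij M_ij - ln M_ij) on the positive matrices of the form M_ij = c_ij - x_i - y_j:
   its derivative in x_i is sum_j 1/M_ij - sum_j W_ij, and similarly for y_j.  The function is
   coercive on the positive orthant, so it attains a minimum on this closed affine set of matrices.
   For uniqueness, write M_ij - M'_ij = a_i + b_j for two solutions.  Equal row and column sums of
   1/M and 1/M' give sum_ij (a_i + b_j)(1/M'_ij - 1/M_ij) = 0, whose terms
   (a_i + b_j)^2 / (M_ij M'_ij) are nonnegative; hence a_i + b_j = 0, so the solution is unique up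
   to (x + s, y - s), and 1^T x = 1^T y fixes s. *)

lemma barrier_term_ge:
  fixes w m :: real
  assumes "0 < w" "0 < m"
  shows "1 + ln w \<le> w * m - ln m"
  using ln_le_minus_one[of "w * m"] assms by (simp add: ln_mult)

lemma barrier_term_sublevel_bounds:
  fixes w m K :: real
  assumes w: "0 < w" and m: "0 < m" and le: "w * m - ln m \<le> K"
  shows "exp (- K) \<le> m" and "m \<le> 2 * (K - 1 - ln (w / 2)) / w"
proof -
  have "0 < w * m"
    using w m by simp
  then have "- ln m \<le> K"
    using le by linarith
  then have "exp (- K) \<le> exp (ln m)"
    by simp
  then show "exp (- K) \<le> m"
    using m by simp
  have "1 + ln (w / 2) \<le> w / 2 * m - ln m"
    using barrier_term_ge[of "w / 2" m] w m by simp
  then show "m \<le> 2 * (K - 1 - ln (w / 2)) / w"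
    using le w by (simp add: field_simps)
qed

lemma sum_sum_add_mult:
  fixes u :: "'a \<Rightarrow> 'c::comm_semiring_0"
  shows "(\<Sum>i\<in>A. \<Sum>j\<in>B. (u i + v j) * F i j)
           = (\<Sum>i\<in>A. u i * (\<Sum>j\<in>B. F i j)) + (\<Sum>j\<in>B. v j * (\<Sum>i\<in>A. F i j))"
proof -
  have "(\<Sum>i\<in>A. \<Sum>j\<in>B. (u i + v j) * F i j)
      = (\<Sum>i\<in>A. \<Sum>j\<in>B. u i * F i j) + (\<Sum>i\<in>A. \<Sum>j\<in>B. v j * F i j)"
    by (simp add: distrib_right sum.distrib)
  also have "(\<Sum>i\<in>A. \<Sum>j\<in>B. v j * F i j) = (\<Sum>j\<in>B. \<Sum>i\<in>A. v j * F i j)"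
    by (rule sum.swap)
  finally show ?thesis
    by (simp add: sum_distrib_left)
qed

lemma potentials_add_eq_0_imp_const:
  fixes a :: "'a \<Rightarrow> real" and b :: "'b \<Rightarrow> real"
  assumes "\<And>i j. a i + b j = 0"
  obtains s where "\<And>i. a i = s" "\<And>j. b j = - s"
  using assms by (metis add.commute add_eq_0_iff)

lemma bounded_entrywise_cart:
  fixes S :: "(real ^ 'b ^ 'a) set"
  assumes "\<And>M i j. M \<in> S \<Longrightarrow> \<bar>M $ i $ j\<bar> \<le> B i j"
  shows "bounded S"
  unfolding bounded_iff
proof (intro exI ballI)
  fix M assume "M \<in> S"
  have "norm M \<le> (\<Sum>i\<in>UNIV. norm (M $ i))"
    unfolding norm_vec_def by (rule L2_set_le_sum) simp
  also have "\<dots> \<le> (\<Sum>i\<in>UNIV. \<Sum>j\<in>UNIV. \<bar>M $ i $ j\<bar>)"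
    by (intro sum_mono norm_le_l1_cart)
  also have "\<dots> \<le> (\<Sum>i\<in>UNIV. \<Sum>j\<in>UNIV. B i j)"
    by (intro sum_mono assms[OF \<open>M \<in> S\<close>])
  finally show "norm M \<le> (\<Sum>i\<in>UNIV. \<Sum>j\<in>UNIV. B i j)" .
qed

definition log_barrier :: "real ^ 'b ^ 'a \<Rightarrow> real ^ 'b ^ 'a \<Rightarrow> real" where
  "log_barrier W M = (\<Sum>i\<in>UNIV. \<Sum>j\<in>UNIV. W $ i $ j * M $ i $ j - ln (M $ i $ j))"

lemma open_positive_matrices: "open {M :: real ^ 'b ^ 'a. \<forall>i j. 0 < M $ i $ j}"
proof -
  have "{M :: real ^ 'b ^ 'a. \<forall>i j. 0 < M $ i $ j} = (\<Inter>i. \<Inter>j. {M. 0 < M $ i $ j})"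
    by auto
  also have "open \<dots>"
    by (intro open_INT ballI open_Collect_less continuous_intros) auto
  finally show ?thesis .
qed

lemma continuous_on_log_barrier: "continuous_on {M. \<forall>i j. 0 < M $ i $ j} (log_barrier W)"
  unfolding log_barrier_def
  by (intro continuous_intros ballI) (simp add: order_less_imp_not_eq2)

lemma log_barrier_directional_derivative:
  assumes "\<forall>i j. 0 < M $ i $ j"
  shows "((\<lambda>t. log_barrier W (M + t *\<^sub>R V)) has_real_derivative
           (\<Sum>i\<in>UNIV. \<Sum>j\<in>UNIV. V $ i $ j * (W $ i $ j - inverse (M $ i $ j)))) (at 0)"
proof -
  have "((\<lambda>t. \<Sum>i\<in>UNIV. \<Sum>j\<in>UNIV.
              W $ i $ j * (M $ i $ j + t * V $ i $ j) - ln (M $ i $ j + t * V $ i $ j))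
          has_real_derivative
           (\<Sum>i\<in>UNIV. \<Sum>j\<in>UNIV. V $ i $ j * (W $ i $ j - inverse (M $ i $ j)))) (at 0)"
    by (intro derivative_eq_intros refl)
      (use assms in \<open>auto simp: algebra_simps divide_inverse\<close>)
  then show ?thesis
    by (simp add: log_barrier_def)
qed

lemma log_barrier_stationary:
  assumes M: "\<forall>i j. 0 < M $ i $ j"
    and minimal: "\<And>t. \<forall>i j. 0 < (M + t *\<^sub>R V) $ i $ j \<Longrightarrow>
      log_barrier W M \<le> log_barrier W (M + t *\<^sub>R V)"
  shows "(\<Sum>i\<in>UNIV. \<Sum>j\<in>UNIV. V $ i $ j * (W $ i $ j - inverse (M $ i $ j))) = 0"
    (is "?D = 0")
proof -
  have "((\<lambda>t. M + t *\<^sub>R V) \<longlongrightarrow> M) (at 0)"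
    by (intro tendsto_eq_intros) auto
  then have "\<forall>\<^sub>F t in at 0. M + t *\<^sub>R V \<in> {M. \<forall>i j. 0 < M $ i $ j}"
    using open_positive_matrices M by (intro topological_tendstoD) auto
  then have "\<forall>\<^sub>F t in at 0. log_barrier W (M + 0 *\<^sub>R V) \<le> log_barrier W (M + t *\<^sub>R V)"
    by eventually_elim (simp add: minimal)
  with log_barrier_directional_derivative[OF M, of W V, unfolded has_field_derivative_def]
  have "(*) ?D = (\<lambda>h. 0)"
    by (rule has_derivative_local_min)
  from fun_cong[OF this, of 1] show ?thesis
    by simp
qed

lemma log_barrier_term_le:
  assumes W: "\<forall>i j. 0 < W $ i $ j" and M: "\<forall>i j. 0 < M $ i $ j"
  shows "W $ i $ j * M $ i $ j - ln (M $ i $ j)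
           \<le> log_barrier W M - (\<Sum>k\<in>UNIV. \<Sum>l\<in>UNIV. 1 + ln (W $ k $ l)) + (1 + ln (W $ i $ j))"
proof -
  define g where "g k l = W $ k $ l * M $ k $ l - ln (M $ k $ l) - (1 + ln (W $ k $ l))" for k l
  have g_nonneg: "0 \<le> g k l" for k l
    using barrier_term_ge[of "W $ k $ l" "M $ k $ l"] W M by (simp add: g_def)
  have "g i j \<le> (\<Sum>l\<in>UNIV. g i l)"
    by (rule member_le_sum) (auto simp: g_nonneg)
  also have "\<dots> \<le> (\<Sum>k\<in>UNIV. \<Sum>l\<in>UNIV. g k l)"
    by (rule member_le_sum[of i UNIV "\<lambda>k. \<Sum>l\<in>UNIV. g k l"]) (auto intro: sum_nonneg g_nonneg)
  also have "\<dots> = log_barrier W M - (\<Sum>k\<in>UNIV. \<Sum>l\<in>UNIV. 1 + ln (W $ k $ l))"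
    by (simp add: g_def log_barrier_def sum_subtractf)
  finally show ?thesis
    by (simp add: g_def)
qed

lemma compact_log_barrier_sublevel:
  assumes W: "\<forall>i j. 0 < W $ i $ j"
  shows "compact {M. (\<forall>i j. 0 < M $ i $ j) \<and> log_barrier W M \<le> K}"
proof -
  define K' where
    "K' i j = K - (\<Sum>k\<in>UNIV. \<Sum>l\<in>UNIV. 1 + ln (W $ k $ l)) + (1 + ln (W $ i $ j))" for i j
  define lo where "lo i j = exp (- K' i j)" for i j
  define hi where "hi i j = 2 * (K' i j - 1 - ln (W $ i $ j / 2)) / W $ i $ j" for i j
  have bounds: "lo i j \<le> M $ i $ j \<and> M $ i $ j \<le> hi i j"
    if M: "\<forall>i j. 0 < M $ i $ j" and le: "log_barrier W M \<le> K" for M i j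
  proof -
    have "W $ i $ j * M $ i $ j - ln (M $ i $ j) \<le> K' i j"
      using log_barrier_term_le[OF W M, of i j] le by (simp add: K'_def)
    then show ?thesis
      unfolding lo_def hi_def
      using barrier_term_sublevel_bounds[of "W $ i $ j" "M $ i $ j" "K' i j"] W M by auto
  qed
  let ?S = "{M. (\<forall>i j. 0 < M $ i $ j) \<and> log_barrier W M \<le> K}"
  let ?Lo = "{M. \<forall>i j. lo i j \<le> M $ i $ j}"
  have Lo_pos: "0 < M $ i $ j" if "M \<in> ?Lo" for M i j
    using that less_le_trans[of 0 "lo i j"] by (simp add: lo_def)
  have S_eq: "?S = ?Lo \<inter> log_barrier W -` {..K}"
    using bounds Lo_pos by blast
  have "continuous_on ?Lo (log_barrier W)"
    by (rule continuous_on_subset[OF continuous_on_log_barrier]) (auto intro: Lo_pos)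
  moreover have "closed ?Lo"
    by (intro closed_Collect_all closed_Collect_le continuous_intros)
  ultimately have "closed ?S"
    unfolding S_eq by (rule continuous_closed_preimage) simp
  moreover have "bounded ?S"
  proof (rule bounded_entrywise_cart)
    fix M i j
    assume "M \<in> ?S"
    then have "0 < M $ i $ j" "M $ i $ j \<le> hi i j"
      using bounds by auto
    then show "\<bar>M $ i $ j\<bar> \<le> hi i j"
      by simp
  qed
  ultimately show ?thesis
    unfolding compact_eq_bounded_closed by blast
qed

lemma log_barrier_attains_min:
  assumes W: "\<forall>i j. 0 < W $ i $ j" and A: "closed A"
    and M0: "M0 \<in> A" "\<forall>i j. 0 < M0 $ i $ j"
  obtains M where "M \<in> A" "\<forall>i j. 0 < M $ i $ j"
    "\<And>N. N \<in> A \<Longrightarrow> \<forall>i j. 0 < N $ i $ j \<Longrightarrow> log_barrier W M \<le> log_barrier W N"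
proof -
  let ?S = "A \<inter> {M. (\<forall>i j. 0 < M $ i $ j) \<and> log_barrier W M \<le> log_barrier W M0}"
  have "compact ?S"
    using A compact_log_barrier_sublevel[OF W] by (rule closed_Int_compact)
  moreover have "M0 \<in> ?S"
    using M0 by simp
  moreover have "continuous_on ?S (log_barrier W)"
    by (rule continuous_on_subset[OF continuous_on_log_barrier]) auto
  ultimately obtain M where M: "M \<in> ?S"
    and M_min: "\<And>N. N \<in> ?S \<Longrightarrow> log_barrier W M \<le> log_barrier W N"
    using continuous_attains_inf[of ?S "log_barrier W"] by blast
  show ?thesis
  proof (rule that)
    show "M \<in> A" "\<forall>i j. 0 < M $ i $ j"
      using M by auto
  next
    fix N
    assume N: "N \<in> A" "\<forall>i j. 0 < N $ i $ j"
    show "log_barrier W M \<le> log_barrier W N"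
    proof (cases "log_barrier W N \<le> log_barrier W M0")
      case True
      then show ?thesis
        using M_min N by simp
    next
      case False
      then show ?thesis
        using M_min[OF \<open>M0 \<in> ?S\<close>] by simp
    qed
  qed
qed

definition reduced_cost :: "real ^ 'b ^ 'a \<Rightarrow> real ^ 'a \<Rightarrow> real ^ 'b \<Rightarrow> real ^ 'b ^ 'a" where
  "reduced_cost C x y = (\<chi> i j. C $ i $ j - x $ i - y $ j)"

lemma reduced_cost_nth [simp]: "reduced_cost C x y $ i $ j = C $ i $ j - x $ i - y $ j"
  by (simp add: reduced_cost_def)

lemma reduced_cost_diff_scaled:
  "reduced_cost C (x - t *\<^sub>R u) (y - t *\<^sub>R v) = reduced_cost C x y + t *\<^sub>R (\<chi> i j. u $ i + v $ j)"
  by (simp add: vec_eq_iff algebra_simps)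

lemma reduced_cost_shift: "reduced_cost C (x + (\<chi> i. s)) (y - (\<chi> j. s)) = reduced_cost C x y"
  by (simp add: vec_eq_iff)

lemma closed_range_reduced_cost: "closed (range (\<lambda>(x, y). reduced_cost C x y))"
proof -
  have "linear (\<lambda>(x, y). reduced_cost 0 x y)"
    by (intro linearI) (auto simp: vec_eq_iff algebra_simps)
  then have "closed (range (\<lambda>(x, y). reduced_cost 0 x y))"
    by (rule closed_subspace[OF linear_subspace_image[OF _ subspace_UNIV]])
  then have "closed ((+) C ` range (\<lambda>(x, y). reduced_cost 0 x y))"
    by (rule closed_translation)
  moreover have "(\<lambda>(x, y). reduced_cost C x y) = (+) C \<circ> (\<lambda>(x, y). reduced_cost 0 x y)"
    by (auto simp: fun_eq_iff vec_eq_iff)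
  ultimately show ?thesis
    by (simp add: image_comp)
qed

lemma reduced_cost_log_barrier_min_marginals:
  assumes pos: "\<forall>i j. 0 < reduced_cost C x y $ i $ j"
    and minimal: "\<And>x' y'. \<forall>i j. 0 < reduced_cost C x' y' $ i $ j \<Longrightarrow>
      log_barrier W (reduced_cost C x y) \<le> log_barrier W (reduced_cost C x' y')"
  shows "(\<Sum>j\<in>UNIV. inverse (reduced_cost C x y $ i $ j)) = (\<Sum>j\<in>UNIV. W $ i $ j)"
    and "(\<Sum>i\<in>UNIV. inverse (reduced_cost C x y $ i $ j)) = (\<Sum>i\<in>UNIV. W $ i $ j)"
proof -
  define F where "F i j = W $ i $ j - inverse (reduced_cost C x y $ i $ j)" for i j
  have stationary:
    "(\<Sum>i\<in>UNIV. u $ i * (\<Sum>j\<in>UNIV. F i j)) + (\<Sum>j\<in>UNIV. v $ j * (\<Sum>i\<in>UNIV. F i j)) = 0" for u v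
  proof -
    let ?V = "\<chi> i j. u $ i + v $ j"
    have "log_barrier W (reduced_cost C x y) \<le> log_barrier W (reduced_cost C x y + t *\<^sub>R ?V)"
      if "\<forall>i j. 0 < (reduced_cost C x y + t *\<^sub>R ?V) $ i $ j" for t
      using minimal that unfolding reduced_cost_diff_scaled[symmetric] by blast
    then have "(\<Sum>i\<in>UNIV. \<Sum>j\<in>UNIV. ?V $ i $ j * F i j) = 0"
      unfolding F_def using pos by (rule log_barrier_stationary[rotated])
    then show ?thesis
      by (simp add: sum_sum_add_mult)
  qed
  have "(\<Sum>j\<in>UNIV. F i j) = 0"
    using stationary[of "\<chi> k. of_bool (k = i)" 0] by simp
  then show "(\<Sum>j\<in>UNIV. inverse (reduced_cost C x y $ i $ j)) = (\<Sum>j\<in>UNIV. W $ i $ j)"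
    by (simp add: F_def sum_subtractf)
  have "(\<Sum>i\<in>UNIV. F i j) = 0"
    using stationary[of 0 "\<chi> l. of_bool (l = j)"] by simp
  then show "(\<Sum>i\<in>UNIV. inverse (reduced_cost C x y $ i $ j)) = (\<Sum>i\<in>UNIV. W $ i $ j)"
    by (simp add: F_def sum_subtractf)
qed

lemma exists_reduced_cost_inverse_marginals:
  assumes W: "\<forall>i j. 0 < W $ i $ j"
  obtains x y where "\<forall>i j. 0 < reduced_cost C x y $ i $ j"
    "\<And>i. (\<Sum>j\<in>UNIV. inverse (reduced_cost C x y $ i $ j)) = (\<Sum>j\<in>UNIV. W $ i $ j)"
    "\<And>j. (\<Sum>i\<in>UNIV. inverse (reduced_cost C x y $ i $ j)) = (\<Sum>i\<in>UNIV. W $ i $ j)"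
proof -
  let ?A = "range (\<lambda>(x, y). reduced_cost C x y)"
  define x0 :: "real ^ 'a" where "x0 = (\<chi> i. - norm C - 1)"
  have "0 < reduced_cost C x0 0 $ i $ j" for i j
  proof -
    have "\<bar>C $ i $ j\<bar> \<le> norm (C $ i)"
      by (rule component_le_norm_cart)
    also have "\<dots> \<le> norm C"
      by (rule Finite_Cartesian_Product.norm_nth_le)
    finally show ?thesis
      by (simp add: x0_def)
  qed
  then obtain M where "M \<in> ?A" and M_pos: "\<forall>i j. 0 < M $ i $ j"
    and M_min: "\<And>N. N \<in> ?A \<Longrightarrow> \<forall>i j. 0 < N $ i $ j \<Longrightarrow> log_barrier W M \<le> log_barrier W N"
    using log_barrier_attains_min[OF W closed_range_reduced_cost, of "reduced_cost C x0 0"]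
    by blast
  then obtain x y where M: "M = reduced_cost C x y"
    by auto
  have pos: "\<forall>i j. 0 < reduced_cost C x y $ i $ j"
    using M_pos by (simp add: M)
  have "reduced_cost C x' y' \<in> ?A" for x' y'
    by (rule range_eqI[of _ _ "(x', y')"]) simp
  then have "log_barrier W (reduced_cost C x y) \<le> log_barrier W (reduced_cost C x' y')"
    if "\<forall>i j. 0 < reduced_cost C x' y' $ i $ j" for x' y'
    using M_min that by (simp add: M)
  from pos reduced_cost_log_barrier_min_marginals[OF pos this] show ?thesis
    by (rule that)
qed

lemma inverse_marginals_eq_imp_potential_diff_eq_0:
  fixes M M' :: "real ^ 'b ^ 'a"
  assumes pos: "\<forall>i j. 0 < M $ i $ j" "\<forall>i j. 0 < M' $ i $ j"
    and diff: "\<And>i j. M $ i $ j - M' $ i $ j = a i + b j"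
    and rows: "\<And>i. (\<Sum>j\<in>UNIV. inverse (M $ i $ j)) = (\<Sum>j\<in>UNIV. inverse (M' $ i $ j))"
    and cols: "\<And>j. (\<Sum>i\<in>UNIV. inverse (M $ i $ j)) = (\<Sum>i\<in>UNIV. inverse (M' $ i $ j))"
  shows "a i + b j = 0"
proof -
  define T where "T i j = (a i + b j) * (inverse (M' $ i $ j) - inverse (M $ i $ j))" for i j
  have pos_ij: "0 < M $ i $ j" "0 < M' $ i $ j" for i j
    using pos by auto
  have T_eq: "T i j = (a i + b j)\<^sup>2 / (M $ i $ j * M' $ i $ j)" for i j
  proof -
    have "inverse (M' $ i $ j) - inverse (M $ i $ j)
        = (M $ i $ j - M' $ i $ j) / (M $ i $ j * M' $ i $ j)"
      using pos_ij[of i j] by (simp add: field_simps)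
    then show ?thesis
      by (simp add: T_def diff power2_eq_square)
  qed
  have T_nonneg: "0 \<le> T i j" for i j
    using pos_ij[of i j] by (simp add: T_eq)
  have "(\<Sum>(i, j)\<in>UNIV. T i j) = (\<Sum>i\<in>UNIV. \<Sum>j\<in>UNIV. T i j)"
    by (simp add: sum.cartesian_product UNIV_Times_UNIV[symmetric] del: UNIV_Times_UNIV)
  also have "\<dots> = 0"
    unfolding T_def sum_sum_add_mult by (simp add: sum_subtractf rows cols)
  finally have "T i j = 0"
    using sum_nonneg_eq_0_iff[of UNIV "\<lambda>(i, j). T i j"] T_nonneg by auto
  then show ?thesis
    using pos_ij[of i j] by (simp add: T_eq)
qed

lemma sum_shift_balanced_iff:
  fixes x :: "real ^ 'a" and y :: "real ^ 'b"
  shows "(\<Sum>i\<in>UNIV. (x + (\<chi> i. s)) $ i) = (\<Sum>j\<in>UNIV. (y - (\<chi> j. s)) $ j)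
           \<longleftrightarrow> s = ((\<Sum>j\<in>UNIV. y $ j) - (\<Sum>i\<in>UNIV. x $ i)) / (CARD('a) + CARD('b))"
proof -
  have "(0::real) < CARD('a) + CARD('b)"
    by (simp add: add_pos_pos)
  then show ?thesis
    by (simp add: sum.distrib sum_subtractf field_simps)
qed

lemma reduced_cost_inverse_marginals_unique_up_to_shift:
  assumes "\<forall>i j. 0 < reduced_cost C x y $ i $ j" "\<forall>i j. 0 < reduced_cost C x' y' $ i $ j"
    and "\<And>i. (\<Sum>j\<in>UNIV. inverse (reduced_cost C x y $ i $ j))
                = (\<Sum>j\<in>UNIV. inverse (reduced_cost C x' y' $ i $ j))"
    and "\<And>j. (\<Sum>i\<in>UNIV. inverse (reduced_cost C x y $ i $ j))
                = (\<Sum>i\<in>UNIV. inverse (reduced_cost C x' y' $ i $ j))"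
  obtains s where "x' = x + (\<chi> i. s)" "y' = y - (\<chi> j. s)"
proof -
  have "(x' $ i - x $ i) + (y' $ j - y $ j) = 0" for i j
    by (rule inverse_marginals_eq_imp_potential_diff_eq_0[OF assms(1,2) _ assms(3,4)]) simp
  then obtain s where "\<And>i. x' $ i - x $ i = s" "\<And>j. y' $ j - y $ j = - s"
    using potentials_add_eq_0_imp_const[of "\<lambda>i. x' $ i - x $ i" "\<lambda>j. y' $ j - y $ j"] by blast
  then show ?thesis
    by (intro that) (auto simp: vec_eq_iff algebra_simps)
qed

lemma exists_positive_matrix_with_marginals:
  fixes d1 :: "real ^ 'a" and d2 :: "real ^ 'b"
  assumes "\<forall>i. 0 < d1 $ i" "\<forall>j. 0 < d2 $ j" "(\<Sum>i\<in>UNIV. d1 $ i) = (\<Sum>j\<in>UNIV. d2 $ j)"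
  obtains W :: "real ^ 'b ^ 'a" where "\<forall>i j. 0 < W $ i $ j"
    "\<And>i. (\<Sum>j\<in>UNIV. W $ i $ j) = d1 $ i" "\<And>j. (\<Sum>i\<in>UNIV. W $ i $ j) = d2 $ j"
proof
  define S where "S = (\<Sum>i\<in>UNIV. d1 $ i)"
  have "0 < S"
    unfolding S_def using assms(1) by (simp add: sum_pos)
  show "\<forall>i j. 0 < (\<chi> i j. d1 $ i * d2 $ j / S) $ i $ j"
    using assms(1,2) \<open>0 < S\<close> by simp
  show "(\<Sum>j\<in>UNIV. (\<chi> i j. d1 $ i * d2 $ j / S) $ i $ j) = d1 $ i" for i
    using assms(3) \<open>0 < S\<close>
    by (simp add: S_def sum_divide_distrib[symmetric] sum_distrib_left[symmetric])
  show "(\<Sum>i\<in>UNIV. (\<chi> i j. d1 $ i * d2 $ j / S) $ i $ j) = d2 $ j" for j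
    using \<open>0 < S\<close>
    by (simp add: S_def sum_divide_distrib[symmetric] sum_distrib_right[symmetric])
qed

theorem reduced_cost_inverse_marginals_ex1:
  fixes C W :: "real ^ 'b ^ 'a"
  assumes W: "\<forall>i j. 0 < W $ i $ j"
  shows "\<exists>!(x, y). (\<forall>i j. C $ i $ j - x $ i - y $ j > 0)
          \<and> (\<Sum>i\<in>UNIV. x $ i) = (\<Sum>j\<in>UNIV. y $ j)
          \<and> (\<forall>i. (\<Sum>j\<in>UNIV. inverse (C $ i $ j - x $ i - y $ j)) = (\<Sum>j\<in>UNIV. W $ i $ j))
          \<and> (\<forall>j. (\<Sum>i\<in>UNIV. inverse (C $ i $ j - x $ i - y $ j)) = (\<Sum>i\<in>UNIV. W $ i $ j))"
    (is "\<exists>!(x, y). ?P x y")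
proof -
  obtain x0 y0 where sol: "\<forall>i j. 0 < reduced_cost C x0 y0 $ i $ j"
    "\<And>i. (\<Sum>j\<in>UNIV. inverse (reduced_cost C x0 y0 $ i $ j)) = (\<Sum>j\<in>UNIV. W $ i $ j)"
    "\<And>j. (\<Sum>i\<in>UNIV. inverse (reduced_cost C x0 y0 $ i $ j)) = (\<Sum>i\<in>UNIV. W $ i $ j)"
    using exists_reduced_cost_inverse_marginals[OF W] by blast
  define s where "s = ((\<Sum>j\<in>UNIV. y0 $ j) - (\<Sum>i\<in>UNIV. x0 $ i)) / (CARD('a) + CARD('b))"
  define x where "x = x0 + (\<chi> i. s)"
  define y where "y = y0 - (\<chi> j. s)"
  have shift: "reduced_cost C x y = reduced_cost C x0 y0"
    by (simp add: x_def y_def reduced_cost_shift)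
  have balanced: "(\<Sum>i\<in>UNIV. x $ i) = (\<Sum>j\<in>UNIV. y $ j)"
    unfolding x_def y_def s_def by (rule sum_shift_balanced_iff[THEN iffD2, OF refl])
  have "?P x y"
    using sol balanced by (simp flip: shift)
  moreover have "x' = x \<and> y' = y" if P': "?P x' y'" for x' y'
  proof -
    obtain s' where s': "x' = x + (\<chi> i. s')" "y' = y - (\<chi> j. s')"
      by (rule reduced_cost_inverse_marginals_unique_up_to_shift[of C x y x' y'])
        (use sol P' in \<open>simp_all add: shift\<close>)
    then have "s' = 0"
      using sum_shift_balanced_iff[where x = x and y = y and s = s'] balanced P' by simp
    with s' show ?thesis
      by (simp add: vec_eq_iff)
  qed
  ultimately show ?thesis
    by (auto intro!: ex1I[of _ "(x, y)"])
qed

theorem corollary2p8: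
  fixes C :: "real ^ 'n2 ^ 'n1" and d1 :: "real ^ 'n1" and d2 :: "real ^ 'n2"
  assumes "\<forall>i. d1 $ i > 0" and "\<forall>j. d2 $ j > 0"
    and "(\<Sum>i\<in>UNIV. d1 $ i) = (\<Sum>j\<in>UNIV. d2 $ j)"
  shows "\<exists>!(x, y). (\<forall>i j. C $ i $ j - x $ i - y $ j > 0)
          \<and> (\<Sum>i\<in>UNIV. x $ i) = (\<Sum>j\<in>UNIV. y $ j)
          \<and> (\<forall>i. (\<Sum>j\<in>UNIV. inverse (C $ i $ j - x $ i - y $ j)) = d1 $ i)
          \<and> (\<forall>j. (\<Sum>i\<in>UNIV. inverse (C $ i $ j - x $ i - y $ j)) = d2 $ j)"
proof -
  obtain W :: "real ^ 'n2 ^ 'n1" where "\<forall>i j. 0 < W $ i $ j"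
    and "\<And>i. (\<Sum>j\<in>UNIV. W $ i $ j) = d1 $ i" and "\<And>j. (\<Sum>i\<in>UNIV. W $ i $ j) = d2 $ j"
    using exists_positive_matrix_with_marginals[OF assms] by blast
  then show ?thesis
    using reduced_cost_inverse_marginals_ex1[of W C] by simp
qed

end
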